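(* Fix $j\in\{1,\dots,p\}$ and assume the setting in the context with: $\tilde m(\mathbf x)=\sum_{\ell=1}^p m_\ell(x^{(\ell)})$ for functions $m_\ell:[0,1]\to\mathbb R$; $\sup_{\mathbf x\in[0,1]^p}|\tilde m(\mathbf x)|\le K$ for some $K>0$; $\mathbb E[\varepsilon^4]<\infty$; and $\mathrm{Var}(m_j(X^{(j)}))>0$. Let $(\gamma_n)$ be integers with $\gamma_n\ge 2$ and $\gamma_n\to\infty$. Then there exists $\tilde\zeta>0$ such that $\gamma_n^2\,\zeta_{1,\gamma_n}\to\tilde\zeta$ as $n\to\infty$.
   Context: Setting. Let $p\ge 1$. Let $\mathbf X=(X^{(1)},\dots,X^{(p)})$ be uniformly distributed on $[0,1]^p$ (so its coordinates are mutually independent), and let $Y=\tilde m(\mathbf X)+\varepsilon$, where $\tilde m:[0,1]^p\to\mathbb R$ is measurable, $\varepsilon$ is independent of $\mathbf X$, $\mathbb E[\varepsilon]=0$ and $\mathrm{Var}(\varepsilon)=\sigma^2>0$. Let $\mathbf Z_i=(\mathbf X_i,Y_i)$, $i=1,2,\dots$, be i.i.d. copies of $(\mathbf X,Y)$, with $\varepsilon_i=Y_i-\tilde m(\mathbf X_i)$. Fix the feature index $j$. Permuted points and kernel. A derangement of a finite set $S$ is a bijection $\pi:S\to S$ with $\pi(i)\neq i$ for all $i$. For a derangement $\pi$ of an index set $S$ and $i\in S$, let $\mathbf X_i^{\pi}$ be the vector $\mathbf X_i$ with its $j$-th coordinate replaced by $X_{\pi(i)}^{(j)}$. For an integer $\gamma\ge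 2$ define the random variable $$h_\gamma=h_\gamma(\mathbf Z_1,\dots,\mathbf Z_\gamma;\pi)=\frac1\gamma\sum_{i=1}^\gamma\Big\{\big(Y_i-\tilde m(\mathbf X_i^{\pi})\big)^2-\big(Y_i-\tilde m(\mathbf X_i)\big)^2\Big\},$$ where $\pi$ is a uniformly distributed random derangement of $\{1,\dots,\gamma\}$, independent of the data. Set $\zeta_{1,\gamma}=\mathrm{Var}\big(\mathbb E[h_\gamma\mid \mathbf Z_1]\big)$ and $\zeta_\gamma=\mathrm{Var}(h_\gamma)$. *)

theory Defs
  imports "HOL-Probability.Probability"
begin

definition unif01 :: "real measure" where
  "unif01 = uniform_measure lborel {0..1}"

definition Xdist :: "nat \<Rightarrow> (nat \<Rightarrow> real) measure" where
  "Xdist p = PiM {..<p} (\<lambda>_. unif01)"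

text \<open>Distribution of one observation, represented as the pair (X, eps), with eps independent of X
  and having distribution mu; the response is Y = mtilde X + eps.\<close>
definition obs_dist :: "nat \<Rightarrow> real measure \<Rightarrow> ((nat \<Rightarrow> real) \<times> real) measure" where
  "obs_dist p \<mu> = Xdist p \<Otimes>\<^sub>M \<mu>"

definition mtilde :: "(nat \<Rightarrow> real \<Rightarrow> real) \<Rightarrow> nat \<Rightarrow> (nat \<Rightarrow> real) \<Rightarrow> real" where
  "mtilde m p x = (\<Sum>l<p. m l (x l))"

definition derangements :: "nat \<Rightarrow> (nat \<Rightarrow> nat) set" where
  "derangements n = {\<pi>. \<pi> permutes {..<n} \<and> (\<forall>i<n. \<pi> i \<noteq> i)}"

definition hker :: "(nat \<Rightarrow> real \<Rightarrow> real) \<Rightarrow> nat \<Rightarrow> nat \<Rightarrow> nat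
    \<Rightarrow> (nat \<Rightarrow> (nat \<Rightarrow> real) \<times> real) \<Rightarrow> (nat \<Rightarrow> nat) \<Rightarrow> real" where
  "hker m p j \<gamma> zs \<pi> = (1 / real \<gamma>) * (\<Sum>i<\<gamma>.
      (let x = fst (zs i); y = mtilde m p x + snd (zs i)
       in (y - mtilde m p (x(j := fst (zs (\<pi> i)) j)))\<^sup>2 - (y - mtilde m p x)\<^sup>2))"

text \<open>Average of the kernel over a uniformly random derangement (independent of the data).\<close>
definition hbar :: "(nat \<Rightarrow> real \<Rightarrow> real) \<Rightarrow> nat \<Rightarrow> nat \<Rightarrow> nat
    \<Rightarrow> (nat \<Rightarrow> (nat \<Rightarrow> real) \<times> real) \<Rightarrow> real" where
  "hbar m p j \<gamma> zs = (\<Sum>\<pi>\<in>derangements \<gamma>. hker m p j \<gamma> zs \<pi>) / real (card (derangements \<gamma>))"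

text \<open>E[h_gamma | Z_1 = z]: the first observation (index 0) is fixed to z, all other
  observations (i.i.d. with law obs_dist) and the derangement are integrated out.\<close>
definition condexp1 :: "(nat \<Rightarrow> real \<Rightarrow> real) \<Rightarrow> nat \<Rightarrow> nat \<Rightarrow> real measure \<Rightarrow> nat
    \<Rightarrow> (nat \<Rightarrow> real) \<times> real \<Rightarrow> real" where
  "condexp1 m p j \<mu> \<gamma> z =
     (\<integral>zs. hbar m p j \<gamma> (zs(0 := z)) \<partial>(PiM {..<\<gamma>} (\<lambda>_. obs_dist p \<mu>)))"

definition zeta1 :: "(nat \<Rightarrow> real \<Rightarrow> real) \<Rightarrow> nat \<Rightarrow> nat \<Rightarrow> real measure \<Rightarrow> nat \<Rightarrow> real" where
  "zeta1 m p j \<mu> \<gamma> =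
     (\<integral>z. (condexp1 m p j \<mu> \<gamma> z - (\<integral>z'. condexp1 m p j \<mu> \<gamma> z' \<partial>obs_dist p \<mu>))\<^sup>2 \<partial>obs_dist p \<mu>)"

end

theory Submission
  imports Defs
begin

text \<open>Since mtilde is additive, replacing the j-th coordinate of X_i by that of X_\<pi>(i) shifts
  mtilde by m_j(X_\<pi>(i)^(j)) - m_j(X_i^(j)); hence the i-th summand of h_\<gamma> is a fixed function
  kernel_term(Z_\<pi>(i), Z_i) of two observations. Given Z_1, only the summand with i = 1 and the
  one with \<pi>(i) = 1 involve Z_1, and their conditional means add up to proj(Z_1) plus a constant,
  where proj(z) = 2 d(z)^2 + 2 \<epsilon> d(z) and d = m_j(x^(j)) - E m_j. So
  E[h_\<gamma> | Z_1] = proj(Z_1)/\<gamma> + c_\<gamma>, and \<gamma>^2 \<zeta>_{1,\<gamma>} = Var proj(Z_1) for every \<gamma> \<ge> 2;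
  this constant is 4 Var(d^2) + 4 Var(m_j) \<sigma>^2 > 0.\<close>

lemma mtilde_fun_upd:
  assumes "j < p"
  shows "mtilde m p (x(j := t)) = mtilde m p x - m j (x j) + m j t"
proof -
  have "mtilde m p (x(j := t)) = m j t + (\<Sum>l\<in>{..<p}-{j}. m l (x l))"
    unfolding mtilde_def using assms by (subst sum.remove[of _ j]) auto
  moreover have "mtilde m p x = m j (x j) + (\<Sum>l\<in>{..<p}-{j}. m l (x l))"
    unfolding mtilde_def using assms by (subst sum.remove[of _ j]) auto
  ultimately show ?thesis by simp
qed

lemma prob_space_unif01: "prob_space unif01"
  unfolding unif01_def by (intro prob_space_uniform_measure) auto

lemma sets_unif01[measurable_cong]: "sets unif01 = sets borel"
  unfolding unif01_def by simp

lemma AE_unif01: "AE t in unif01. t \<in> {0..1}"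
  unfolding unif01_def by (intro AE_uniform_measureI) auto

lemma integrable_power_le_even:
  fixes M :: "real measure"
  assumes "prob_space M" and "sets M = sets borel"
    and "integrable M (\<lambda>x. x ^ (2 * n))" and "k \<le> 2 * n"
  shows "integrable M (\<lambda>x. x ^ k)"
proof (rule Bochner_Integration.integrable_bound)
  interpret prob_space M by fact
  show "integrable M (\<lambda>x. 1 + x ^ (2 * n))"
    using assms(3) by (intro Bochner_Integration.integrable_add) auto
  show "(\<lambda>x. x ^ k) \<in> borel_measurable M"
    unfolding measurable_cong_sets[OF assms(2) refl] by simp
  have "norm (x ^ k) \<le> norm (1 + x ^ (2 * n))" for x :: real
  proof -
    have even: "0 \<le> x ^ (2 * n)" "\<bar>x\<bar> ^ (2 * n) = x ^ (2 * n)"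
      by (simp_all add: power_mult)
    have "\<bar>x\<bar> ^ k \<le> 1 + x ^ (2 * n)"
    proof (cases "\<bar>x\<bar> \<le> 1")
      case True
      then have "\<bar>x\<bar> ^ k \<le> 1" by (intro power_le_one) auto
      with even show ?thesis by linarith
    next
      case False
      then have "\<bar>x\<bar> ^ k \<le> \<bar>x\<bar> ^ (2 * n)" using assms(4) by (intro power_increasing) auto
      with even show ?thesis by linarith
    qed
    with even show ?thesis by (simp add: power_abs)
  qed
  then show "AE x in M. norm (x ^ k) \<le> norm (1 + x ^ (2 * n))" by simp
qed

lemma
  fixes f :: "'a \<Rightarrow> real" and h :: "'b \<Rightarrow> real"
  assumes "prob_space A" and "prob_space B" and f: "integrable A f" and h: "integrable B h"
  shows integrable_pair_measure_mult: "integrable (A \<Otimes>\<^sub>M B) (\<lambda>w. f (fst w) * h (snd w))"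
    and integral_pair_measure_mult:
      "(\<integral>w. f (fst w) * h (snd w) \<partial>(A \<Otimes>\<^sub>M B)) = (\<integral>x. f x \<partial>A) * (\<integral>y. h y \<partial>B)"
proof -
  interpret A: prob_space A by fact
  interpret B: prob_space B by fact
  interpret pair_sigma_finite A B by unfold_locales
  have [measurable]: "f \<in> borel_measurable A" "h \<in> borel_measurable B" using f h by auto
  have "(\<integral>\<^sup>+ w. ennreal (norm (f (fst w) * h (snd w))) \<partial>(A \<Otimes>\<^sub>M B))
      = (\<integral>\<^sup>+ x. \<integral>\<^sup>+ y. ennreal (norm (f x)) * ennreal (norm (h y)) \<partial>B \<partial>A)"
    by (subst B.nn_integral_fst[symmetric]) (auto simp: abs_mult ennreal_mult)
  also have "\<dots> = (\<integral>\<^sup>+ x. ennreal (norm (f x)) \<partial>A) * (\<integral>\<^sup>+ y. ennreal (norm (h y)) \<partial>B)"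
    by (simp add: nn_integral_cmult nn_integral_multc)
  also have "\<dots> < \<infinity>"
    using f h by (simp add: integrable_iff_bounded ennreal_mult_less_top)
  finally show "integrable (A \<Otimes>\<^sub>M B) (\<lambda>w. f (fst w) * h (snd w))"
    by (simp add: integrable_iff_bounded)
  then show "(\<integral>w. f (fst w) * h (snd w) \<partial>(A \<Otimes>\<^sub>M B)) = (\<integral>x. f x \<partial>A) * (\<integral>y. h y \<partial>B)"
    using integral_fst[of "\<lambda>x y. f x * h y"] by (simp add: case_prod_beta')
qed

lemma
  fixes f :: "'i \<Rightarrow> 'a \<Rightarrow> real"
  assumes "prob_space M" and "finite I" and "J \<subseteq> I" and f: "\<And>l. l \<in> J \<Longrightarrow> integrable M (f l)"
  shows integrable_PiM_prod_subset: "integrable (PiM I (\<lambda>_. M)) (\<lambda>\<omega>. \<Prod>l\<in>J. f l (\<omega> l))"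
    and integral_PiM_prod_subset:
      "(\<integral>\<omega>. (\<Prod>l\<in>J. f l (\<omega> l)) \<partial>PiM I (\<lambda>_. M)) = (\<Prod>l\<in>J. \<integral>x. f l x \<partial>M)"
proof -
  interpret M: prob_space M by fact
  interpret product_sigma_finite "\<lambda>_. M" by unfold_locales
  define f' where "f' l = (if l \<in> J then f l else (\<lambda>_. 1))" for l
  have f': "\<And>l. l \<in> I \<Longrightarrow> integrable M (f' l)" using f by (simp add: f'_def)
  have "(\<Prod>l\<in>I. g l) = (\<Prod>l\<in>J. g l)" if "\<And>l. l \<in> I - J \<Longrightarrow> g l = 1" for g :: "'i \<Rightarrow> real"
    using assms(2,3) that by (intro prod.mono_neutral_right) auto
  then have "(\<Prod>l\<in>I. f' l (\<omega> l)) = (\<Prod>l\<in>J. f l (\<omega> l))"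
    and "(\<Prod>l\<in>I. \<integral>x. f' l x \<partial>M) = (\<Prod>l\<in>J. \<integral>x. f l x \<partial>M)" for \<omega>
    by (simp_all add: f'_def M.prob_space)
  with product_integrable_prod[of I f', OF assms(2) f'] product_integral_prod[of I f', OF assms(2) f']
  show "integrable (PiM I (\<lambda>_. M)) (\<lambda>\<omega>. \<Prod>l\<in>J. f l (\<omega> l))"
    and "(\<integral>\<omega>. (\<Prod>l\<in>J. f l (\<omega> l)) \<partial>PiM I (\<lambda>_. M)) = (\<Prod>l\<in>J. \<integral>x. f l x \<partial>M)"
    by simp_all
qed

lemma
  fixes F :: "'a \<Rightarrow> real"
  assumes "prob_space M" and "finite I" and "k \<in> I" and "integrable M F"
  shows integrable_PiM_component: "integrable (PiM I (\<lambda>_. M)) (\<lambda>\<omega>. F (\<omega> k))"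
    and integral_PiM_component: "(\<integral>\<omega>. F (\<omega> k) \<partial>PiM I (\<lambda>_. M)) = (\<integral>x. F x \<partial>M)"
  using integrable_PiM_prod_subset[of M I "{k}" "\<lambda>_. F"]
    integral_PiM_prod_subset[of M I "{k}" "\<lambda>_. F"] assms
  by simp_all

lemma integrable_PiM_two_components:
  fixes F G :: "'a \<Rightarrow> real"
  assumes "prob_space M" and "finite I" and "k \<in> I" and "l \<in> I" and "k \<noteq> l"
    and "integrable M F" and "integrable M G"
  shows "integrable (PiM I (\<lambda>_. M)) (\<lambda>\<omega>. F (\<omega> k) * G (\<omega> l))"
  using integrable_PiM_prod_subset[of M I "{k, l}" "\<lambda>i. if i = k then F else G"] assms
  by simp

lemma (in prob_space) variance_divide_add_const:
  fixes X :: "'a \<Rightarrow> real"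
  assumes "integrable M X"
  shows "variance (\<lambda>x. X x / c + d) = variance X / c\<^sup>2"
proof -
  have "expectation (\<lambda>x. X x / c + d) = expectation X / c + d"
    using assms by (simp add: prob_space)
  moreover have "(X x / c + d - (expectation X / c + d))\<^sup>2 = (X x - expectation X)\<^sup>2 / c\<^sup>2" for x
    by (simp add: diff_divide_distrib[symmetric] power_divide)
  ultimately show ?thesis by simp
qed

lemma finite_derangements: "finite (derangements N)"
  by (rule finite_subset[OF _ finite_permutations[of "{..<N}"]]) (auto simp: derangements_def)

lemma derangements_nonempty:
  assumes "2 \<le> N"
  shows "derangements N \<noteq> {}"
proof -
  define \<sigma> where "\<sigma> i = (if i < N then (if Suc i < N then Suc i else 0) else i)" for i
  have inj: "inj_on \<sigma> {..<N}"
    by (auto simp: inj_on_def \<sigma>_def split: if_splits)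
  have "\<sigma> ` {..<N} = {..<N}"
    using assms by (intro endo_inj_surj[OF _ _ inj]) (auto simp: \<sigma>_def)
  with inj have "\<sigma> permutes {..<N}"
    by (intro bij_imp_permutes) (auto simp: bij_betw_def \<sigma>_def)
  moreover have "\<forall>i<N. \<sigma> i \<noteq> i" using assms by (auto simp: \<sigma>_def)
  ultimately show ?thesis by (auto simp: derangements_def)
qed

lemma
  fixes T :: "'a \<Rightarrow> 'a \<Rightarrow> real"
  assumes "prob_space M" and \<pi>: "\<pi> \<in> derangements N" and "0 < N"
    and left: "integrable M (\<lambda>w. T w z)" and right: "integrable M (\<lambda>w. T z w)"
    and pairs: "\<And>a b. a < N \<Longrightarrow> b < N \<Longrightarrow> a \<noteq> b
      \<Longrightarrow> integrable (PiM {..<N} (\<lambda>_. M)) (\<lambda>zs. T (zs a) (zs b))"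
  shows integrable_derangement_sum_fun_upd:
      "integrable (PiM {..<N} (\<lambda>_. M)) (\<lambda>zs. \<Sum>i<N. T ((zs(0 := z)) (\<pi> i)) ((zs(0 := z)) i))"
    and integral_derangement_sum_fun_upd:
      "(\<integral>zs. (\<Sum>i<N. T ((zs(0 := z)) (\<pi> i)) ((zs(0 := z)) i)) \<partial>PiM {..<N} (\<lambda>_. M))
        = (\<integral>w. T w z \<partial>M) + (\<integral>w. T z w \<partial>M)
          + (\<Sum>i | i < N \<and> i \<noteq> 0 \<and> \<pi> i \<noteq> 0. \<integral>zs. T (zs (\<pi> i)) (zs i) \<partial>PiM {..<N} (\<lambda>_. M))"
proof -
  let ?P = "PiM {..<N} (\<lambda>_. M)"
  define t where "t i zs = T ((zs(0 := z)) (\<pi> i)) ((zs(0 := z)) i)" for i zs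
  define i0 where "i0 = inv \<pi> 0"
  define R where "R = {i. i < N \<and> i \<noteq> 0 \<and> \<pi> i \<noteq> 0}"
  have perm: "\<pi> permutes {..<N}" and fix_free: "\<And>i. i < N \<Longrightarrow> \<pi> i \<noteq> i"
    using \<pi> by (auto simp: derangements_def)
  have \<pi>_less: "\<pi> i < N" if "i < N" for i
    using permutes_in_image[OF perm] that by simp
  have \<pi>_i0: "\<pi> i0 = 0" and i0_less: "i0 < N"
    using permutes_inverses(1)[OF perm] permutes_in_image[OF permutes_inv[OF perm]] \<open>0 < N\<close>
    by (auto simp: i0_def)
  have \<pi>_eq_0: "\<pi> i = 0 \<longleftrightarrow> i = i0" for i
    using \<pi>_i0 permutes_inverses(2)[OF perm, of i] by (auto simp: i0_def)
  have i0_ne: "i0 \<noteq> 0" and \<pi>0_ne: "\<pi> 0 \<noteq> 0"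
    using fix_free[OF i0_less] fix_free[OF \<open>0 < N\<close>] \<pi>_i0 by auto
  have t0: "t 0 = (\<lambda>zs. T (zs (\<pi> 0)) z)" and t_i0: "t i0 = (\<lambda>zs. T z (zs i0))"
    and t_R: "\<And>i. i \<in> R \<Longrightarrow> t i = (\<lambda>zs. T (zs (\<pi> i)) (zs i))"
    using \<pi>0_ne i0_ne \<pi>_i0 by (auto simp: t_def R_def)
  have int_t0: "integrable ?P (t 0)" and int_t_i0: "integrable ?P (t i0)"
    unfolding t0 t_i0 using \<pi>_less[OF \<open>0 < N\<close>] i0_less
    by (auto intro!: integrable_PiM_component assms(1) left right)
  have int_t_R: "integrable ?P (t i)" if "i \<in> R" for i
    using that fix_free \<pi>_less by (auto simp: t_R R_def intro!: pairs)
  have split: "{..<N} = insert 0 (insert i0 R)" and "0 \<notin> insert i0 R" and "i0 \<notin> R"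
    and "finite R"
    using \<open>0 < N\<close> i0_less i0_ne by (auto simp: R_def \<pi>_eq_0)
  then show "integrable ?P (\<lambda>zs. \<Sum>i<N. T ((zs(0 := z)) (\<pi> i)) ((zs(0 := z)) i))"
    using int_t0 int_t_i0 int_t_R unfolding t_def by (auto intro!: Bochner_Integration.integrable_sum)
  have "(\<integral>zs. (\<Sum>i<N. t i zs) \<partial>?P) = (\<Sum>i<N. \<integral>zs. t i zs \<partial>?P)"
    using split int_t0 int_t_i0 int_t_R by (intro Bochner_Integration.integral_sum) auto
  also have "\<dots> = (\<integral>zs. t 0 zs \<partial>?P) + (\<integral>zs. t i0 zs \<partial>?P) + (\<Sum>i\<in>R. \<integral>zs. t i zs \<partial>?P)"
    unfolding split using \<open>0 \<notin> insert i0 R\<close> \<open>i0 \<notin> R\<close> \<open>finite R\<close> by (simp add: add.assoc)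
  also have "\<dots> = (\<integral>w. T w z \<partial>M) + (\<integral>w. T z w \<partial>M)
      + (\<Sum>i\<in>R. \<integral>zs. T (zs (\<pi> i)) (zs i) \<partial>?P)"
    unfolding t0 t_i0 using \<pi>_less[OF \<open>0 < N\<close>] i0_less
    by (simp add: integral_PiM_component[OF assms(1) finite_lessThan _ left]
        integral_PiM_component[OF assms(1) finite_lessThan _ right] t_R cong: sum.cong)
  finally show "(\<integral>zs. (\<Sum>i<N. T ((zs(0 := z)) (\<pi> i)) ((zs(0 := z)) i)) \<partial>?P)
      = (\<integral>w. T w z \<partial>M) + (\<integral>w. T z w \<partial>M)
        + (\<Sum>i | i < N \<and> i \<noteq> 0 \<and> \<pi> i \<noteq> 0. \<integral>zs. T (zs (\<pi> i)) (zs i) \<partial>?P)"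
    by (simp add: t_def R_def)
qed

locale additive_regression =
  fixes m :: "nat \<Rightarrow> real \<Rightarrow> real" and p j :: nat and K :: real and \<mu> :: "real measure"
  assumes j_less_p: "j < p"
    and borel_measurable_mj: "m j \<in> borel_measurable borel"
    and mtilde_bounded: "\<forall>x\<in>PiE {..<p} (\<lambda>_. {0..1}). \<bar>mtilde m p x\<bar> \<le> K"
    and prob_space_noise: "prob_space \<mu>"
    and sets_noise: "sets \<mu> = sets borel"
    and integrable_noise_fourth: "integrable \<mu> (\<lambda>e. e ^ 4)"
    and noise_mean_zero: "(\<integral>e. e \<partial>\<mu>) = 0"
begin

sublocale noise: prob_space \<mu> by (rule prob_space_noise)

abbreviation "Obs \<equiv> obs_dist p \<mu>"

sublocale obs: prob_space Obs
  unfolding obs_dist_def Xdist_def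
  by (intro prob_space_pair prob_space_PiM prob_space_unif01 prob_space_noise)

declare borel_measurable_mj[measurable]

lemma integrable_noise_power: "k \<le> 4 \<Longrightarrow> integrable \<mu> (\<lambda>e. e ^ k)"
  using integrable_power_le_even[OF prob_space_noise sets_noise, of 2] integrable_noise_fourth
  by simp

lemma mj_bounded: "\<exists>B. \<forall>t\<in>{0..1}. \<bar>m j t\<bar> \<le> B"
proof (intro exI ballI)
  fix t :: real assume t: "t \<in> {0..1}"
  define x0 where "x0 = (\<lambda>l\<in>{..<p}. (0::real))"
  have "x0 \<in> PiE {..<p} (\<lambda>_. {0..1})" and "x0(j := t) \<in> PiE {..<p} (\<lambda>_. {0..1})"
    using t j_less_p by (auto simp: PiE_iff extensional_def x0_def)
  then have "\<bar>mtilde m p x0\<bar> \<le> K" and "\<bar>mtilde m p x0 - m j 0 + m j t\<bar> \<le> K"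
    using mtilde_bounded j_less_p by (auto simp: mtilde_fun_upd x0_def)
  then show "\<bar>m j t\<bar> \<le> 2 * K + \<bar>m j 0\<bar>" by linarith
qed

lemma integrable_unif01_comp_mj:
  fixes \<phi> :: "real \<Rightarrow> real"
  assumes "continuous_on UNIV \<phi>"
  shows "integrable unif01 (\<lambda>t. \<phi> (m j t))"
proof -
  interpret unif: prob_space unif01 by (rule prob_space_unif01)
  obtain B where B: "\<forall>t\<in>{0..1}. \<bar>m j t\<bar> \<le> B" using mj_bounded by blast
  have "bounded (\<phi> ` {-B..B})"
    by (intro compact_imp_bounded compact_continuous_image continuous_on_subset[OF assms]) auto
  then obtain C where C: "\<forall>y\<in>\<phi> ` {-B..B}. norm y \<le> C"
    unfolding bounded_iff by blast
  have [measurable]: "\<phi> \<in> borel_measurable borel"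
    using assms by (rule borel_measurable_continuous_onI)
  have "AE t in unif01. norm (\<phi> (m j t)) \<le> C"
    using AE_unif01 by eventually_elim (use B C in force)
  then show ?thesis by (intro unif.integrable_const_bound) simp_all
qed

definition mean_mj :: real where "mean_mj = (\<integral>t. m j t \<partial>unif01)"

definition var_mj :: real where "var_mj = (\<integral>t. (m j t - mean_mj)\<^sup>2 \<partial>unif01)"

definition dev :: "(nat \<Rightarrow> real) \<times> real \<Rightarrow> real" where
  "dev w = m j (fst w j) - mean_mj"

lemma
  fixes \<phi> h :: "real \<Rightarrow> real"
  assumes "continuous_on UNIV \<phi>" and "integrable \<mu> h"
  shows integrable_obs_dev_noise: "integrable Obs (\<lambda>w. \<phi> (dev w) * h (snd w))"
    and integral_obs_dev_noise: "(\<integral>w. \<phi> (dev w) * h (snd w) \<partial>Obs)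
      = (\<integral>t. \<phi> (m j t - mean_mj) \<partial>unif01) * (\<integral>e. h e \<partial>\<mu>)"
proof -
  let ?f = "\<lambda>t. \<phi> (t - mean_mj)"
  have "continuous_on UNIV ?f"
    by (intro continuous_on_compose2[OF assms(1)] continuous_intros) auto
  then have f: "integrable unif01 (\<lambda>t. ?f (m j t))"
    by (rule integrable_unif01_comp_mj)
  have X: "integrable (Xdist p) (\<lambda>x. ?f (m j (x j)))"
    and EX: "(\<integral>x. ?f (m j (x j)) \<partial>Xdist p) = (\<integral>t. ?f (m j t) \<partial>unif01)"
    unfolding Xdist_def using j_less_p
    by (auto intro: integrable_PiM_component integral_PiM_component prob_space_unif01 f)
  show "integrable Obs (\<lambda>w. \<phi> (dev w) * h (snd w))"
    using integrable_pair_measure_mult[OF _ prob_space_noise X assms(2)] obs.prob_space_axioms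
    by (simp add: obs_dist_def dev_def Xdist_def prob_space_PiM prob_space_unif01)
  show "(\<integral>w. \<phi> (dev w) * h (snd w) \<partial>Obs) = (\<integral>t. \<phi> (m j t - mean_mj) \<partial>unif01) * (\<integral>e. h e \<partial>\<mu>)"
    using integral_pair_measure_mult[OF _ prob_space_noise X assms(2)] EX
    by (simp add: obs_dist_def dev_def Xdist_def prob_space_PiM prob_space_unif01)
qed

lemma integrable_noise: "integrable \<mu> (\<lambda>e. e)"
  using integrable_noise_power[of 1] by simp

lemma integrable_noise_sq: "integrable \<mu> (\<lambda>e. e\<^sup>2)"
  using integrable_noise_power[of 2] by simp

lemma integral_unif01_dev: "(\<integral>t. m j t - mean_mj \<partial>unif01) = 0"
proof -
  interpret unif: prob_space unif01 by (rule prob_space_unif01)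
  have "integrable unif01 (m j)" using integrable_unif01_comp_mj[of "\<lambda>x. x"] by simp
  then show ?thesis by (simp add: mean_mj_def unif.prob_space Bochner_Integration.integral_diff)
qed

lemma
  shows integrable_obs_dev: "integrable Obs dev"
    and integral_obs_dev: "(\<integral>w. dev w \<partial>Obs) = 0"
    and integrable_obs_dev_sq: "integrable Obs (\<lambda>w. (dev w)\<^sup>2)"
    and integral_obs_dev_sq: "(\<integral>w. (dev w)\<^sup>2 \<partial>Obs) = var_mj"
    and integrable_obs_noise: "integrable Obs snd"
    and integral_obs_noise: "(\<integral>w. snd w \<partial>Obs) = 0"
    and integrable_obs_noise_dev: "integrable Obs (\<lambda>w. snd w * dev w)"
    and integral_obs_noise_dev: "(\<integral>w. snd w * dev w \<partial>Obs) = 0"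
proof -
  have one: "integrable \<mu> (\<lambda>_. 1::real)" "(\<integral>e. 1 \<partial>\<mu>) = (1::real)"
    by (simp_all add: noise.prob_space)
  show "integrable Obs dev" "(\<integral>w. dev w \<partial>Obs) = 0"
    using integrable_obs_dev_noise[of "\<lambda>x. x", OF _ one(1)]
      integral_obs_dev_noise[of "\<lambda>x. x", OF _ one(1)] one(2) integral_unif01_dev
    by simp_all
  show "integrable Obs (\<lambda>w. (dev w)\<^sup>2)" "(\<integral>w. (dev w)\<^sup>2 \<partial>Obs) = var_mj"
    using integrable_obs_dev_noise[of "\<lambda>x. x\<^sup>2", OF continuous_on_power[OF continuous_on_id] one(1)]
      integral_obs_dev_noise[of "\<lambda>x. x\<^sup>2", OF continuous_on_power[OF continuous_on_id] one(1)] one(2)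
    by (simp_all add: var_mj_def)
  show "integrable Obs snd" "(\<integral>w. snd w \<partial>Obs) = 0"
    using integrable_obs_dev_noise[of "\<lambda>_. 1", OF _ integrable_noise]
      integral_obs_dev_noise[of "\<lambda>_. 1", OF _ integrable_noise] noise_mean_zero
    by simp_all
  show "integrable Obs (\<lambda>w. snd w * dev w)" "(\<integral>w. snd w * dev w \<partial>Obs) = 0"
    using integrable_obs_dev_noise[of "\<lambda>x. x", OF _ integrable_noise]
      integral_obs_dev_noise[of "\<lambda>x. x", OF _ integrable_noise] noise_mean_zero
    by (simp_all add: mult.commute)
qed

definition kernel_term :: "(nat \<Rightarrow> real) \<times> real \<Rightarrow> (nat \<Rightarrow> real) \<times> real \<Rightarrow> real" where
  "kernel_term u v = (dev u - dev v)\<^sup>2 - 2 * snd v * (dev u - dev v)"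

definition proj :: "(nat \<Rightarrow> real) \<times> real \<Rightarrow> real" where
  "proj z = 2 * (dev z)\<^sup>2 + 2 * snd z * dev z"

lemma hker_eq_kernel_term_sum:
  "hker m p j N zs \<pi> = (\<Sum>i<N. kernel_term (zs (\<pi> i)) (zs i)) / real N"
proof -
  have "(let x = fst (zs i); y = mtilde m p x + snd (zs i)
         in (y - mtilde m p (x(j := fst (zs (\<pi> i)) j)))\<^sup>2 - (y - mtilde m p x)\<^sup>2)
      = kernel_term (zs (\<pi> i)) (zs i)" for i
    using j_less_p
    by (simp add: Let_def mtilde_fun_upd kernel_term_def dev_def power2_eq_square algebra_simps)
  then show ?thesis by (simp add: hker_def)
qed

lemma
  shows integrable_kernel_term_left: "integrable Obs (\<lambda>w. kernel_term w z)"
    and integral_kernel_term_left: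
      "(\<integral>w. kernel_term w z \<partial>Obs) = var_mj + (dev z)\<^sup>2 + 2 * snd z * dev z"
proof -
  have eq: "(\<lambda>w. kernel_term w z) = (\<lambda>w. (dev w)\<^sup>2 - (2 * (dev z + snd z)) * dev w
      + ((dev z)\<^sup>2 + 2 * snd z * dev z))"
    by (rule ext) (simp add: kernel_term_def power2_eq_square algebra_simps)
  show "integrable Obs (\<lambda>w. kernel_term w z)"
    unfolding eq using integrable_obs_dev integrable_obs_dev_sq by simp
  show "(\<integral>w. kernel_term w z \<partial>Obs) = var_mj + (dev z)\<^sup>2 + 2 * snd z * dev z"
    unfolding eq using integrable_obs_dev integrable_obs_dev_sq integral_obs_dev integral_obs_dev_sq
    by (simp add: obs.prob_space)
qed

lemma
  shows integrable_kernel_term_right: "integrable Obs (\<lambda>w. kernel_term z w)"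
    and integral_kernel_term_right: "(\<integral>w. kernel_term z w \<partial>Obs) = (dev z)\<^sup>2 + var_mj"
proof -
  have eq: "(\<lambda>w. kernel_term z w) = (\<lambda>w. (dev z)\<^sup>2 - (2 * dev z) * dev w + (dev w)\<^sup>2
      - (2 * dev z) * snd w + 2 * (snd w * dev w))"
    by (rule ext) (simp add: kernel_term_def power2_eq_square algebra_simps)
  note ints = integrable_obs_dev integrable_obs_dev_sq integrable_obs_noise integrable_obs_noise_dev
  show "integrable Obs (\<lambda>w. kernel_term z w)"
    unfolding eq using ints by simp
  show "(\<integral>w. kernel_term z w \<partial>Obs) = (dev z)\<^sup>2 + var_mj"
    unfolding eq using ints integral_obs_dev integral_obs_dev_sq integral_obs_noise
      integral_obs_noise_dev
    by (simp add: obs.prob_space)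
qed

lemma integrable_kernel_term_components:
  assumes "finite I" and "a \<in> I" and "b \<in> I" and "a \<noteq> b"
  shows "integrable (PiM I (\<lambda>_. Obs)) (\<lambda>\<omega>. kernel_term (\<omega> a) (\<omega> b))"
proof -
  have eq: "(\<lambda>\<omega>. kernel_term (\<omega> a) (\<omega> b)) = (\<lambda>\<omega>. (dev (\<omega> a))\<^sup>2 + (dev (\<omega> b))\<^sup>2
      + 2 * (snd (\<omega> b) * dev (\<omega> b))
      - 2 * (dev (\<omega> a) * dev (\<omega> b)) - 2 * (dev (\<omega> a) * snd (\<omega> b)))"
    by (rule ext) (simp add: kernel_term_def power2_eq_square algebra_simps)
  note one = integrable_PiM_component[OF obs.prob_space_axioms assms(1)]
  note two = integrable_PiM_two_components[OF obs.prob_space_axioms assms]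
  show ?thesis unfolding eq
    using one[OF assms(2) integrable_obs_dev_sq] one[OF assms(3) integrable_obs_dev_sq]
      one[OF assms(3) integrable_obs_noise_dev]
      two[OF integrable_obs_dev integrable_obs_dev] two[OF integrable_obs_dev integrable_obs_noise]
    by simp
qed

lemma integrable_proj: "integrable Obs proj"
  unfolding proj_def[abs_def] using integrable_obs_dev_sq integrable_obs_noise_dev
  by (simp add: mult.assoc)

lemma integral_proj: "(\<integral>z. proj z \<partial>Obs) = 2 * var_mj"
  unfolding proj_def[abs_def] using integrable_obs_dev_sq integrable_obs_noise_dev
    integral_obs_dev_sq integral_obs_noise_dev
  by (simp add: mult.assoc)

lemma condexp1_eq_proj:
  assumes "2 \<le> N"
  obtains c where "\<And>z. condexp1 m p j \<mu> N z = proj z / real N + c"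
proof -
  let ?P = "PiM {..<N} (\<lambda>_. Obs)" and ?D = "derangements N"
  define S where "S \<pi> = (\<Sum>i | i < N \<and> i \<noteq> 0 \<and> \<pi> i \<noteq> 0.
      \<integral>\<omega>. kernel_term (\<omega> (\<pi> i)) (\<omega> i) \<partial>?P)" for \<pi>
  have N: "0 < N" and card_D: "0 < card ?D"
    using assms derangements_nonempty[OF assms] finite_derangements by (auto simp: card_gt_0_iff)
  note sum_int = integrable_derangement_sum_fun_upd[OF obs.prob_space_axioms _ N
      integrable_kernel_term_left integrable_kernel_term_right integrable_kernel_term_components]
    and sum_eq = integral_derangement_sum_fun_upd[OF obs.prob_space_axioms _ N
      integrable_kernel_term_left integrable_kernel_term_right integrable_kernel_term_components]
  have hker_int: "integrable ?P (\<lambda>zs. hker m p j N (zs(0 := z)) \<pi>)"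
    and hker_eq: "(\<integral>zs. hker m p j N (zs(0 := z)) \<pi> \<partial>?P) = (proj z + 2 * var_mj + S \<pi>) / real N"
    if "\<pi> \<in> ?D" for \<pi> z
    using sum_int[OF that] sum_eq[OF that]
    by (simp_all add: hker_eq_kernel_term_sum integral_kernel_term_left integral_kernel_term_right
        proj_def S_def)
  have "condexp1 m p j \<mu> N z = proj z / real N + (2 * var_mj + (\<Sum>\<pi>\<in>?D. S \<pi>) / card ?D) / N"
    for z
  proof -
    have "condexp1 m p j \<mu> N z = (\<Sum>\<pi>\<in>?D. \<integral>zs. hker m p j N (zs(0 := z)) \<pi> \<partial>?P) / card ?D"
      unfolding condexp1_def hbar_def using hker_int by (simp add: Bochner_Integration.integral_sum)
    also have "\<dots> = (\<Sum>\<pi>\<in>?D. (proj z + 2 * var_mj + S \<pi>) / real N) / card ?D"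
      by (simp add: hker_eq)
    finally show ?thesis
      using card_D N by (simp add: sum.distrib sum_divide_distrib[symmetric] field_simps)
  qed
  then show thesis by (rule that)
qed

lemma scaled_zeta1_eq_variance_proj:
  assumes "2 \<le> N"
  shows "(real N)\<^sup>2 * zeta1 m p j \<mu> N = obs.variance proj"
proof -
  obtain c where c: "\<And>z. condexp1 m p j \<mu> N z = proj z / real N + c"
    using condexp1_eq_proj[OF assms] by blast
  have "zeta1 m p j \<mu> N = obs.variance (\<lambda>z. proj z / real N + c)"
    unfolding zeta1_def c ..
  also have "\<dots> = obs.variance proj / (real N)\<^sup>2"
    by (rule obs.variance_divide_add_const[OF integrable_proj])
  finally show ?thesis using assms by simp
qed

lemma variance_proj:
  "obs.variance proj
    = 4 * (\<integral>t. ((m j t - mean_mj)\<^sup>2 - var_mj)\<^sup>2 \<partial>unif01) + 4 * var_mj * (\<integral>e. e\<^sup>2 \<partial>\<mu>)"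
proof -
  let ?\<phi>1 = "\<lambda>x. (x\<^sup>2 - var_mj)\<^sup>2" and ?\<phi>2 = "\<lambda>x. (x\<^sup>2 - var_mj) * x"
    and ?\<phi>3 = "\<lambda>x::real. x\<^sup>2"
  have cont: "continuous_on UNIV ?\<phi>1" "continuous_on UNIV ?\<phi>2" "continuous_on UNIV ?\<phi>3"
    by (intro continuous_intros)+
  have one: "integrable \<mu> (\<lambda>_. 1::real)" "(\<integral>e. 1 \<partial>\<mu>) = (1::real)"
    by (simp_all add: noise.prob_space)
  note int1 = integrable_obs_dev_noise[OF cont(1) one(1)]
    and int2 = integrable_obs_dev_noise[OF cont(2) integrable_noise]
    and int3 = integrable_obs_dev_noise[OF cont(3) integrable_noise_sq]
  note eq1 = integral_obs_dev_noise[OF cont(1) one(1)]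
    and eq2 = integral_obs_dev_noise[OF cont(2) integrable_noise]
    and eq3 = integral_obs_dev_noise[OF cont(3) integrable_noise_sq]
  let ?f1 = "\<lambda>z. 4 * (?\<phi>1 (dev z) * 1)" and ?f2 = "\<lambda>z. 8 * (?\<phi>2 (dev z) * snd z)"
    and ?f3 = "\<lambda>z. 4 * (?\<phi>3 (dev z) * (snd z)\<^sup>2)"
  have "(\<lambda>z. (proj z - (\<integral>w. proj w \<partial>Obs))\<^sup>2) = (\<lambda>z. ?f1 z + ?f2 z + ?f3 z)"
    unfolding integral_proj by (rule ext) (simp add: proj_def power2_eq_square algebra_simps)
  moreover have "integrable Obs ?f1" "integrable Obs ?f2" "integrable Obs ?f3"
    by (fact integrable_mult_right[OF int1] integrable_mult_right[OF int2]
        integrable_mult_right[OF int3])+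
  ultimately have "obs.variance proj = (\<integral>z. ?f1 z \<partial>Obs) + (\<integral>z. ?f2 z \<partial>Obs) + (\<integral>z. ?f3 z \<partial>Obs)"
    by (simp only: Bochner_Integration.integral_add Bochner_Integration.integrable_add)
  also have "\<dots> = 4 * (\<integral>t. ((m j t - mean_mj)\<^sup>2 - var_mj)\<^sup>2 \<partial>unif01)
      + 4 * var_mj * (\<integral>e. e\<^sup>2 \<partial>\<mu>)"
    unfolding integral_mult_right_zero eq1 eq2 eq3 one(2) noise_mean_zero
    by (simp add: var_mj_def[symmetric])
  finally show ?thesis .
qed

end

theorem lemma1:
  fixes p j :: nat and m :: "nat \<Rightarrow> real \<Rightarrow> real" and K :: real
    and \<mu> :: "real measure" and \<gamma> :: "nat \<Rightarrow> nat"
  assumes "j < p"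
    and "\<And>l. l < p \<Longrightarrow> m l \<in> borel_measurable borel"
    and "K > 0"
    and "\<forall>x\<in>PiE {..<p} (\<lambda>_. {0..1}). \<bar>mtilde m p x\<bar> \<le> K"
    and "prob_space \<mu>" and "sets \<mu> = sets borel"
    and "integrable \<mu> (\<lambda>e. e ^ 4)"
    and "(\<integral>e. e \<partial>\<mu>) = 0"
    and "(\<integral>e. e\<^sup>2 \<partial>\<mu>) > 0"
    and "(\<integral>t. (m j t - (\<integral>s. m j s \<partial>unif01))\<^sup>2 \<partial>unif01) > 0"
    and "\<And>n. \<gamma> n \<ge> 2"
    and "filterlim \<gamma> at_top sequentially"
  shows "\<exists>\<zeta>>0. (\<lambda>n. (real (\<gamma> n))\<^sup>2 * zeta1 m p j \<mu> (\<gamma> n)) \<longlonglongrightarrow> \<zeta>"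
proof -
  interpret additive_regression m p j K \<mu>
    using assms(1) assms(2)[OF assms(1)] assms(4-8) by (rule additive_regression.intro)
  have "var_mj > 0" using assms(10) by (simp add: var_mj_def mean_mj_def)
  then have "0 < 4 * var_mj * (\<integral>e. e\<^sup>2 \<partial>\<mu>)" using assms(9) by simp
  moreover have "0 \<le> (\<integral>t. ((m j t - mean_mj)\<^sup>2 - var_mj)\<^sup>2 \<partial>unif01)" by simp
  ultimately have pos: "obs.variance proj > 0" unfolding variance_proj by linarith
  have "(\<lambda>n. (real (\<gamma> n))\<^sup>2 * zeta1 m p j \<mu> (\<gamma> n)) = (\<lambda>n. obs.variance proj)"
    using scaled_zeta1_eq_variance_proj[OF assms(11)] by simp
  then show ?thesis using pos by (intro exI[of _ "obs.variance proj"]) simp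
qed

end
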